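(* Let $V$ be a finite set with positive element weights ($\vert A \vert$ = total weight of $A \subseteq V$), let $\mathcal{P}, \mathcal{P}'$ be partitions of $V$ into nonempty parts, and let $P_i', P_j' \in \mathcal{P}'$ be distinct. Define $\phi^*_{i',j'} : 2^{\mathcal{P}} \to \mathbb{R}$ by $$\phi^*_{i',j'}(\mathcal{S}) := \vert U_{\mathcal{S}} \cap P_j' \vert + \vert P_i' \vert - \vert U_{\mathcal{S}} \cap P_i' \vert + \sum_{P' \in \mathcal{P}' \setminus \{P_i', P_j'\}} \vert P' \vert \operatorname{peak}\Big(\frac{\vert U_{\mathcal{S}} \cap P' \vert}{\vert P' \vert}\Big).$$ Then $\phi^*_{i',j'}$ is submodular, and it is not symmetric in general: there exist $V$, $\mathcal{P}$, $\mathcal{P}'$, $P_i'$, $P_j'$ and $\mathcal{S} \subseteq \mathcal{P}$ with $\phi^*_{i',j'}(\mathcal{S}) \ne \phi^*_{i',j'}(\mathcal{P} \setminus \mathcal{S})$.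
   Context: $U_{\mathcal{S}}$ denotes the union of the sets in $\mathcal{S}$; $\operatorname{peak}(x) = x$ for $x \le 1/2$ and $1-x$ for $x > 1/2$. A function $\Pi : 2^{\mathcal{P}} \to \mathbb{R}$ is submodular if $\Pi(\mathcal{S}_1 \cup \mathcal{S}_2) \le \Pi(\mathcal{S}_1) + \Pi(\mathcal{S}_2) - \Pi(\mathcal{S}_1 \cap \mathcal{S}_2)$ for all $\mathcal{S}_1, \mathcal{S}_2$, and symmetric if $\Pi(\mathcal{S}) = \Pi(\mathcal{P} \setminus \mathcal{S})$ for all $\mathcal{S}$. *)

theory Defs
  imports "HOL-Analysis.Analysis"
begin

definition wt :: "('a \<Rightarrow> real) \<Rightarrow> 'a set \<Rightarrow> real" where
  "wt w A = (\<Sum>x\<in>A. w x)"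

definition peak :: "real \<Rightarrow> real" where
  "peak x = (if x \<le> 1/2 then x else 1 - x)"

definition is_partition :: "'a set \<Rightarrow> 'a set set \<Rightarrow> bool" where
  "is_partition V P \<longleftrightarrow> (\<Union>P = V) \<and> (\<forall>A\<in>P. A \<noteq> {}) \<and>
     (\<forall>A\<in>P. \<forall>B\<in>P. A \<noteq> B \<longrightarrow> A \<inter> B = {})"

abbreviation U :: "'a set set \<Rightarrow> 'a set" where
  "U S \<equiv> \<Union>S"

definition phi_star :: "('a \<Rightarrow> real) \<Rightarrow> 'a set set \<Rightarrow> 'a set \<Rightarrow> 'a set \<Rightarrow> 'a set set \<Rightarrow> real" where
  "phi_star w P' Pa Pb S =
     wt w (U S \<inter> Pb) + wt w Pa - wt w (U S \<inter> Pa) +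
     (\<Sum>Q\<in>P' - {Pa, Pb}. wt w Q * peak (wt w (U S \<inter> Q) / wt w Q))"

definition submodular_on :: "'b set \<Rightarrow> ('b set \<Rightarrow> real) \<Rightarrow> bool" where
  "submodular_on P f \<longleftrightarrow> (\<forall>S1 S2. S1 \<subseteq> P \<longrightarrow> S2 \<subseteq> P \<longrightarrow>
      f (S1 \<union> S2) \<le> f S1 + f S2 - f (S1 \<inter> S2))"

definition symmetric_on :: "'b set \<Rightarrow> ('b set \<Rightarrow> real) \<Rightarrow> bool" where
  "symmetric_on P f \<longleftrightarrow> (\<forall>S. S \<subseteq> P \<longrightarrow> f S = f (P - S))"

end

theory Submission
  imports Defs
begin

text \<open>
  With \<open>X = U\<^sub>S\<close>, every summand of \<open>\<phi>\<^sup>*\<close> is a function of the weight of \<open>X \<inter> Q\<close> for a single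
  part \<open>Q \<in> \<P>'\<close>: the first three terms are affine in it, and the peak terms equal
  \<open>min |X \<inter> Q| (|Q| - |X \<inter> Q|)\<close>, a concave function of it. Since \<open>X \<mapsto> |X \<inter> Q|\<close> is modular
  and monotone, and concave functions of a modular monotone function are submodular, each
  summand is submodular in \<open>X\<close>. Finally \<open>U\<close> turns unions and, because the parts of \<open>\<P>\<close> are
  disjoint, also intersections of subfamilies into unions and intersections of sets.
  For asymmetry, with two singleton parts \<open>P\<^sub>i' = {0}\<close>, \<open>P\<^sub>j' = {1}\<close> and \<open>\<P> = \<P>'\<close>, one has
  \<open>\<phi>\<^sup>*({{0}}) = 0\<close> but \<open>\<phi>\<^sup>*({{1}}) = 2\<close>.
\<close>

lemma peak_scaled: "(t::real) > 0 \<Longrightarrow> t * peak (a / t) = min a (t - a)"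
  unfolding peak_def by (auto simp: field_simps min_def)

lemma min_reflect_spread_le:
  fixes a b c d t :: real
  assumes "c + d = a + b" "d \<le> a" "d \<le> b" "a \<le> c" "b \<le> c"
  shows "min c (t - c) + min d (t - d) \<le> min a (t - a) + min b (t - b)"
  using assms by (simp add: min_def split: if_splits)

lemma wt_Un_Int_inter:
  assumes "finite A"
  shows "wt w ((X \<union> Y) \<inter> A) + wt w ((X \<inter> Y) \<inter> A) = wt w (X \<inter> A) + wt w (Y \<inter> A)"
proof -
  have "(X \<union> Y) \<inter> A = (X \<inter> A) \<union> (Y \<inter> A)" "(X \<inter> Y) \<inter> A = (X \<inter> A) \<inter> (Y \<inter> A)" by auto
  then show ?thesis unfolding wt_def using assms by (simp add: sum.union_inter)
qed

lemma wt_Int_mono: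
  assumes "finite Q" "\<forall>x\<in>Q. w x \<ge> 0" "X \<subseteq> Y"
  shows "wt w (X \<inter> Q) \<le> wt w (Y \<inter> Q)"
  unfolding wt_def using assms by (intro sum_mono2) auto

lemma wt_pos: "finite B \<Longrightarrow> B \<noteq> {} \<Longrightarrow> \<forall>x\<in>B. w x > 0 \<Longrightarrow> wt w B > 0"
  unfolding wt_def by (rule sum_pos) auto

lemma peak_term_Un_Int_le:
  assumes "finite Q" "Q \<noteq> {}" "\<forall>x\<in>Q. w x > 0"
  shows "wt w Q * peak (wt w ((X \<union> Y) \<inter> Q) / wt w Q) + wt w Q * peak (wt w ((X \<inter> Y) \<inter> Q) / wt w Q)
    \<le> wt w Q * peak (wt w (X \<inter> Q) / wt w Q) + wt w Q * peak (wt w (Y \<inter> Q) / wt w Q)"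
proof -
  have nonneg: "\<forall>x\<in>Q. w x \<ge> 0" using assms(3) by auto
  have "wt w Q > 0" using wt_pos assms .
  then show ?thesis
    unfolding peak_scaled[OF \<open>wt w Q > 0\<close>]
    using wt_Un_Int_inter[OF \<open>finite Q\<close>, of w X Y]
    by (intro min_reflect_spread_le) (auto intro!: wt_Int_mono[OF \<open>finite Q\<close> nonneg])
qed

lemma Union_Int_Union_disjoint:
  assumes "\<forall>A\<in>P. \<forall>B\<in>P. A \<noteq> B \<longrightarrow> A \<inter> B = {}" "S1 \<subseteq> P" "S2 \<subseteq> P"
  shows "\<Union>(S1 \<inter> S2) = \<Union>S1 \<inter> \<Union>S2"
proof
  show "\<Union>S1 \<inter> \<Union>S2 \<subseteq> \<Union>(S1 \<inter> S2)"
  proof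
    fix x assume "x \<in> \<Union>S1 \<inter> \<Union>S2"
    then obtain A B where "A \<in> S1" "B \<in> S2" "x \<in> A" "x \<in> B" by auto
    moreover have "A = B" using assms calculation by blast
    ultimately show "x \<in> \<Union>(S1 \<inter> S2)" by auto
  qed
qed auto

lemma phi_star_Un_Int_le:
  assumes fin: "finite V" and pos: "\<forall>x\<in>V. w x > 0" and part: "is_partition V P'"
    and a: "Pa \<in> P'" and b: "Pb \<in> P'"
    and U_Int: "U (S1 \<inter> S2) = U S1 \<inter> U S2"
  shows "phi_star w P' Pa Pb (S1 \<union> S2) + phi_star w P' Pa Pb (S1 \<inter> S2)
           \<le> phi_star w P' Pa Pb S1 + phi_star w P' Pa Pb S2"
proof -
  let ?g = "\<lambda>X Q. wt w Q * peak (wt w (X \<inter> Q) / wt w Q)"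
  let ?X = "U S1" and ?Y = "U S2"
  have part_fin: "finite Q" and part_ne: "Q \<noteq> {}" and part_pos: "\<forall>x\<in>Q. w x > 0"
    if "Q \<in> P'" for Q
  proof -
    have "Q \<subseteq> V" "Q \<noteq> {}" using part that unfolding is_partition_def by auto
    then show "finite Q" "Q \<noteq> {}" "\<forall>x\<in>Q. w x > 0" using fin pos finite_subset by auto
  qed
  have peak_sum: "(\<Sum>Q\<in>P' - {Pa, Pb}. ?g (?X \<union> ?Y) Q) + (\<Sum>Q\<in>P' - {Pa, Pb}. ?g (?X \<inter> ?Y) Q)
      \<le> (\<Sum>Q\<in>P' - {Pa, Pb}. ?g ?X Q) + (\<Sum>Q\<in>P' - {Pa, Pb}. ?g ?Y Q)"
    unfolding sum.distrib[symmetric]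
    by (intro sum_mono peak_term_Un_Int_le) (use part_fin part_ne part_pos in blast)+
  have U_Un: "U (S1 \<union> S2) = ?X \<union> ?Y" by auto
  show ?thesis
    unfolding phi_star_def U_Un U_Int
    using peak_sum wt_Un_Int_inter[OF part_fin[OF a], of w ?X ?Y]
      wt_Un_Int_inter[OF part_fin[OF b], of w ?X ?Y]
    by linarith
qed

lemma phi_star_submodular:
  assumes "finite V" "\<forall>x\<in>V. w x > 0" "is_partition V P" "is_partition V P'"
    "Pa \<in> P'" "Pb \<in> P'"
  shows "submodular_on P (phi_star w P' Pa Pb)"
  unfolding submodular_on_def
proof (intro allI impI)
  fix S1 S2 assume "S1 \<subseteq> P" "S2 \<subseteq> P"
  then have "U (S1 \<inter> S2) = U S1 \<inter> U S2"
    using \<open>is_partition V P\<close> unfolding is_partition_def by (intro Union_Int_Union_disjoint) auto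
  from phi_star_Un_Int_le[OF assms(1,2,4,5,6) this]
  show "phi_star w P' Pa Pb (S1 \<union> S2)
      \<le> phi_star w P' Pa Pb S1 + phi_star w P' Pa Pb S2 - phi_star w P' Pa Pb (S1 \<inter> S2)"
    by linarith
qed

lemma phi_star_not_symmetric:
  "\<not> symmetric_on {{0::nat}, {1}} (phi_star (\<lambda>_. 1) {{0}, {1}} {0} {1})"
proof
  let ?P = "{{0::nat}, {1}}"
  assume "symmetric_on ?P (phi_star (\<lambda>_. 1) ?P {0} {1})"
  moreover have "{{0}} \<subseteq> ?P" "?P - {{0}} = {{1}}" by auto
  ultimately have "phi_star (\<lambda>_. 1) ?P {0} {1} {{0}} = phi_star (\<lambda>_. 1) ?P {0} {1} {{1}}"
    unfolding symmetric_on_def by metis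
  moreover have "?P - {{0}, {1}} = {}" "{0::nat} \<inter> {1} = {}" "{1::nat} \<inter> {0} = {}"
    by auto
  ultimately show False
    unfolding phi_star_def \<open>?P - {{0}, {1}} = {}\<close> by (simp add: wt_def)
qed

theorem proposition10:
  shows "(\<forall>(V :: 'a set) w P P' Pa Pb.
            finite V \<and> (\<forall>x\<in>V. w x > 0) \<and> is_partition V P \<and> is_partition V P' \<and>
            Pa \<in> P' \<and> Pb \<in> P' \<and> Pa \<noteq> Pb
            \<longrightarrow> submodular_on P (phi_star w P' Pa Pb))
       \<and> (\<exists>(V :: nat set) w P P' Pa Pb.
            finite V \<and> (\<forall>x\<in>V. w x > 0) \<and> is_partition V P \<and> is_partition V P' \<and>
            Pa \<in> P' \<and> Pb \<in> P' \<and> Pa \<noteq> Pb \<and>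
            \<not> symmetric_on P (phi_star w P' Pa Pb))"
proof (intro conjI)
  show "\<forall>(V :: 'a set) w P P' Pa Pb.
            finite V \<and> (\<forall>x\<in>V. w x > 0) \<and> is_partition V P \<and> is_partition V P' \<and>
            Pa \<in> P' \<and> Pb \<in> P' \<and> Pa \<noteq> Pb
            \<longrightarrow> submodular_on P (phi_star w P' Pa Pb)"
    using phi_star_submodular by blast
  have "is_partition {0, 1} {{0::nat}, {1}}"
    unfolding is_partition_def by auto
  then show "\<exists>(V :: nat set) w P P' Pa Pb.
            finite V \<and> (\<forall>x\<in>V. w x > 0) \<and> is_partition V P \<and> is_partition V P' \<and>
            Pa \<in> P' \<and> Pb \<in> P' \<and> Pa \<noteq> Pb \<and>
            \<not> symmetric_on P (phi_star w P' Pa Pb)"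
    using phi_star_not_symmetric
    by (intro exI[of _ "{0, 1}"] exI[of _ "\<lambda>_. 1"] exI[of _ "{{0::nat}, {1}}"]
        exI[of _ "{{0::nat}, {1}}"] exI[of _ "{0::nat}"] exI[of _ "{1::nat}"]) auto
qed

end
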